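(* Let $P \subset \mathbb{R}^2$ be a finite point set satisfying the standing condition, let $\varepsilon \in (0,1)$, let $X = \{t_1,\dots,t_m\}$ be the set of extreme points of $P$ indexed in counterclockwise order of their polar angles (indices taken cyclically, so $t_{m+1} = t_1$), and for each $i \in \{1,\dots,m\}$ let $x^*_i \in \mathbb{S}^1$ be the unit vector with $\langle t_i, x\rangle = \langle t_{i+1}, x\rangle$ and $\langle t_i, x\rangle > 0$. Define $$S = X \cup \{ p \in P \setminus X : \exists\, i \in \{1,\dots,m\} \text{ with } \langle p, x^*_i\rangle \geq (1-\varepsilon)\langle t_i, x^*_i\rangle \}.$$ Then for every $p \in P$: $p \in S$ if and only if $R_\varepsilon(p) \neq \varnothing$.
   Context: For a finite $Q \subset \mathbb{R}^2$ and unit vector $x$, $\omega(x,Q) = \max_{p \in Q}\langle p,x\rangle$. Standing condition: $\omega(x,P) > 0$ for all $x \in \mathbb{S}^1$ (the origin is interior to the convex hull of $P$). The Voronoi cell of $p \in P$ is $R(p) = \{x \in \mathbb{R}^2 \setminus \{0\} : \langle p,x\rangle \geq \omega(x,P)\}$; $p$ is an extreme point iff $R(p) \neq \varnothing$ (the extreme points are exactly the vertices of the convex hull of $P$). The $\varepsilon$-approximate Voronoi cell of $p$ is $R_\varepsilon(p) = \{x \in \mathbb{R}^2 \setminus \{0\} : \langle p,x\rangle \geq (1-\varepsilon)\,\omega(x,P)\}$. *)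

theory Defs
  imports "HOL-Analysis.Analysis"
begin

text \<open>The plane R^2 is modelled by the type complex, with its real inner product
  (x \<bullet> y = Re x * Re y + Im x * Im y); polar angle is Arg.\<close>

definition omega :: "complex \<Rightarrow> complex set \<Rightarrow> real" where
  "omega x Q = Max ((\<lambda>p. p \<bullet> x) ` Q)"

definition standing_cond :: "complex set \<Rightarrow> bool" where
  "standing_cond P \<longleftrightarrow> finite P \<and> P \<noteq> {} \<and> (\<forall>x\<in>sphere 0 1. omega x P > 0)"

definition vor_cell :: "complex set \<Rightarrow> complex \<Rightarrow> complex set" where
  "vor_cell P p = {x. x \<noteq> 0 \<and> p \<bullet> x \<ge> omega x P}"

definition approx_cell :: "real \<Rightarrow> complex set \<Rightarrow> complex \<Rightarrow> complex set" where
  "approx_cell \<epsilon> P p = {x. x \<noteq> 0 \<and> p \<bullet> x \<ge> (1 - \<epsilon>) * omega x P}"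

definition extreme_pts :: "complex set \<Rightarrow> complex set" where
  "extreme_pts P = {p. p extreme_point_of (convex hull P)}"

end

theory Submission
  imports Defs
begin

text \<open>Since the origin is interior, consecutive vertices are less than \<open>\<pi>\<close> apart in angle, so the
  cones spanned by \<open>t\<^sub>i\<close> and \<open>t\<^sub>i\<^sub>+\<^sub>1\<close> cover the plane, and the segment \<open>[t\<^sub>i, t\<^sub>i\<^sub>+\<^sub>1]\<close> is an edge
  with outer normal \<open>x\<^sup>*\<^sub>i\<close>, i.e. \<open>\<omega>(x\<^sup>*\<^sub>i, P) = \<langle>t\<^sub>i, x\<^sup>*\<^sub>i\<rangle>\<close>.  Hence \<open>x\<^sup>*\<^sub>i\<close> lies in \<open>R\<^sub>\<epsilon>(p)\<close> as soon
  as \<open>\<langle>p, x\<^sup>*\<^sub>i\<rangle> \<ge> (1 - \<epsilon>) \<langle>t\<^sub>i, x\<^sup>*\<^sub>i\<rangle>\<close>.  Conversely, write \<open>p = a t\<^sub>i + b t\<^sub>i\<^sub>+\<^sub>1\<close> with \<open>a, b \<ge> 0\<close>;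
  then \<open>\<langle>p, x\<rangle> \<le> (a + b) \<omega>(x, P)\<close> for every \<open>x\<close>, with equality at \<open>x = x\<^sup>*\<^sub>i\<close>, so a point
  \<open>x \<in> R\<^sub>\<epsilon>(p)\<close> forces \<open>a + b \<ge> 1 - \<epsilon>\<close>, which is the condition at \<open>x\<^sup>*\<^sub>i\<close>.\<close>

definition cross :: "complex \<Rightarrow> complex \<Rightarrow> real" where
  "cross a b = Re a * Im b - Im a * Re b"

definition ccw_angle :: "complex \<Rightarrow> complex \<Rightarrow> real" where
  "ccw_angle a b = (if Arg a \<le> Arg b then Arg b - Arg a else Arg b - Arg a + 2 * pi)"

lemma Re_eq_cmod_cos_Arg: "Re z = cmod z * cos (Arg z)"
  and Im_eq_cmod_sin_Arg: "Im z = cmod z * sin (Arg z)"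
  by (cases "z = 0"; simp add: cos_Arg sin_Arg)+

lemma cross_polar: "cross a b = cmod a * cmod b * sin (Arg b - Arg a)"
  unfolding cross_def sin_diff Re_eq_cmod_cos_Arg[of a] Re_eq_cmod_cos_Arg[of b]
    Im_eq_cmod_sin_Arg[of a] Im_eq_cmod_sin_Arg[of b]
  by (simp add: algebra_simps)

lemma inner_cis: "t \<bullet> cis \<phi> = cmod t * cos (Arg t - \<phi>)"
  unfolding inner_complex_def cos_diff Re_eq_cmod_cos_Arg[of t] Im_eq_cmod_sin_Arg[of t]
  by (simp add: algebra_simps)

lemma cross_self [simp]: "cross a a = 0"
  by (simp add: cross_def)

lemma cross_scaleR_decomp: "cross u v *\<^sub>R w = cross w v *\<^sub>R u + cross u w *\<^sub>R v"
  by (simp add: complex_eq_iff cross_def algebra_simps)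

lemma ccw_angle_nonneg: "0 \<le> ccw_angle a b"
  and ccw_angle_less_2pi: "ccw_angle a b < 2 * pi"
  using Arg_bounded[of a] Arg_bounded[of b] by (auto simp: ccw_angle_def)

lemma ccw_angle_eq_0_iff: "ccw_angle a b = 0 \<longleftrightarrow> Arg a = Arg b"
  using Arg_bounded[of a] Arg_bounded[of b] by (auto simp: ccw_angle_def)

lemma ccw_angle_self [simp]: "ccw_angle a a = 0"
  by (simp add: ccw_angle_eq_0_iff)

lemma ccw_angle_trans:
  "ccw_angle u v \<le> ccw_angle u w \<Longrightarrow> ccw_angle v w = ccw_angle u w - ccw_angle u v"
  using Arg_bounded[of u] Arg_bounded[of v] Arg_bounded[of w]
  unfolding ccw_angle_def by (auto split: if_split_asm)

lemma cross_ccw_angle: "cross a b = cmod a * cmod b * sin (ccw_angle a b)"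
  by (simp add: cross_polar ccw_angle_def sin_periodic[of "Arg b - Arg a", simplified add_ac])

lemma cross_ccw_angle_diff:
  "cross v w = cmod v * cmod w * sin (ccw_angle u w - ccw_angle u v)"
proof -
  have "ccw_angle u w - ccw_angle u v \<in>
      {Arg w - Arg v, Arg w - Arg v + 2 * pi, Arg w - Arg v - 2 * pi}"
    by (auto simp: ccw_angle_def)
  then have "sin (ccw_angle u w - ccw_angle u v) = sin (Arg w - Arg v)"
    using sin_periodic[of "Arg w - Arg v - 2 * pi"] by auto
  then show ?thesis
    by (simp add: cross_polar)
qed

lemma inner_cis_ccw_angle: "w \<bullet> cis (Arg u + \<phi>) = cmod w * cos (ccw_angle u w - \<phi>)"
proof -
  have "ccw_angle u w - \<phi> = Arg w - (Arg u + \<phi>) \<or> ccw_angle u w - \<phi> = Arg w - (Arg u + \<phi>) + 2 * pi"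
    by (auto simp: ccw_angle_def)
  then have "cos (ccw_angle u w - \<phi>) = cos (Arg w - (Arg u + \<phi>))"
    by (metis cos_periodic)
  then show ?thesis
    by (simp add: inner_cis)
qed

lemma cos_nonpos: "pi / 2 \<le> x \<Longrightarrow> x \<le> 3 * pi / 2 \<Longrightarrow> cos x \<le> 0"
  using cos_ge_zero[of "x - pi"] by simp

lemma cross_nonneg_in_sector:
  assumes "ccw_angle u q \<le> ccw_angle u v" "ccw_angle u v \<le> pi"
  shows "0 \<le> cross u q" "0 \<le> cross q v"
proof -
  show "0 \<le> cross u q"
    using assms ccw_angle_nonneg[of u q] by (simp add: cross_ccw_angle sin_ge_zero)
  show "0 \<le> cross q v"
    using assms ccw_angle_nonneg[of u q]
    by (simp add: cross_ccw_angle_diff[of q v u] sin_ge_zero)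
qed

lemma conic_combination_if_cross_nonneg:
  assumes "0 < cross u v" "0 \<le> cross u q" "0 \<le> cross q v"
  shows "\<exists>a b. 0 \<le> a \<and> 0 \<le> b \<and> q = a *\<^sub>R u + b *\<^sub>R v"
proof (intro exI conjI)
  let ?D = "cross u v"
  show "0 \<le> cross q v / ?D" "0 \<le> cross u q / ?D"
    using assms by simp_all
  have "q = (1 / ?D) *\<^sub>R (?D *\<^sub>R q)"
    using assms(1) by simp
  also have "\<dots> = (cross q v / ?D) *\<^sub>R u + (cross u q / ?D) *\<^sub>R v"
    by (subst cross_scaleR_decomp) (simp add: scaleR_add_right)
  finally show "q = (cross q v / ?D) *\<^sub>R u + (cross u q / ?D) *\<^sub>R v" .
qed

text \<open>If \<open>l + m < 1\<close>, then \<open>l w + m b\<close> lies on the open segment from \<open>w\<close> to a point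
  of the segment \<open>[0, b]\<close>.\<close>

lemma extreme_point_eq_if_combination:
  fixes C :: "'a::real_vector set"
  assumes C: "convex C" "0 \<in> C" and a: "a extreme_point_of C" and "w \<in> C" "b \<in> C"
    and a_eq: "a = l *\<^sub>R w + m *\<^sub>R b" and "0 < l" "0 \<le> m" "l + m < 1"
  shows "a = w"
proof (rule ccontr)
  assume "a \<noteq> w"
  have "0 < 1 - l"
    using assms by simp
  define z where "z = (m / (1 - l)) *\<^sub>R b"
  have "(m / (1 - l)) *\<^sub>R b + (1 - m / (1 - l)) *\<^sub>R 0 \<in> C"
    using assms \<open>0 < 1 - l\<close> by (intro convexD) simp_all
  then have "z \<in> C"
    by (simp add: z_def)
  have a_seg: "a = (1 - (1 - l)) *\<^sub>R w + (1 - l) *\<^sub>R z"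
    using \<open>0 < 1 - l\<close> by (simp add: z_def a_eq)
  with \<open>a \<noteq> w\<close> have "w \<noteq> z"
    by (auto simp: algebra_simps)
  then have "a \<in> open_segment w z"
    unfolding in_segment(2) using assms a_seg by (intro conjI exI[of _ "1 - l"]) auto
  then show False
    using a \<open>w \<in> C\<close> \<open>z \<in> C\<close> unfolding extreme_point_of_def by blast
qed

lemma extreme_point_eq_if_scaled_combination:
  fixes C :: "'a::real_vector set"
  assumes C: "convex C" "0 \<in> C" and v: "v extreme_point_of C" and "w \<in> C" "u \<in> C"
    and dec: "D *\<^sub>R w = A *\<^sub>R u + B *\<^sub>R v" and D: "0 < D" and A: "A \<le> 0" and AB: "D < A + B"
  shows "v = w"
proof -
  have "0 < B"
    using D A AB by linarith
  have "v = (1 / B) *\<^sub>R (B *\<^sub>R v)"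
    using \<open>0 < B\<close> by simp
  also have "B *\<^sub>R v = D *\<^sub>R w - A *\<^sub>R u"
    using dec by (simp add: algebra_simps)
  finally have "v = (D / B) *\<^sub>R w + (- A / B) *\<^sub>R u"
    by (simp add: scaleR_diff_right)
  then show ?thesis
  proof (rule extreme_point_eq_if_combination[OF C v \<open>w \<in> C\<close> \<open>u \<in> C\<close>])
    show "0 < D / B" "0 \<le> - A / B"
      using \<open>0 < B\<close> D A by (simp_all add: divide_nonpos_pos)
    show "D / B + - A / B < 1"
      using \<open>0 < B\<close> AB by (simp add: field_simps)
  qed
qed

text \<open>An extreme point \<open>w\<close> beyond the line through the extreme points \<open>u\<close> and \<open>v\<close> must lie
  in the open cone spanned by \<open>u\<close> and \<open>v\<close>: otherwise \<open>u\<close> or \<open>v\<close> would be a proper convex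
  combination of \<open>w\<close>, the other one and \<open>0\<close>.\<close>

lemma inner_le_on_edge:
  assumes C: "convex C" "0 \<in> C"
    and u: "u extreme_point_of C" and v: "v extreme_point_of C" and "w \<in> C"
    and uv: "0 < cross u v"
    and on_line: "u \<bullet> x = c" "v \<bullet> x = c" "0 < c"
    and outside: "\<not> (0 < cross u w \<and> 0 < cross w v)"
  shows "w \<bullet> x \<le> c"
proof (rule ccontr)
  assume "\<not> w \<bullet> x \<le> c"
  then have wx: "c < w \<bullet> x" by simp
  define D A B where "D = cross u v" and "A = cross w v" and "B = cross u w"
  have dec: "D *\<^sub>R w = A *\<^sub>R u + B *\<^sub>R v"
    unfolding D_def A_def B_def by (rule cross_scaleR_decomp)
  have D: "0 < D"
    using uv by (simp add: D_def)
  have "D * (w \<bullet> x) = (A + B) * c"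
    using arg_cong[OF dec, of "\<lambda>z. z \<bullet> x"] on_line by (simp add: inner_add_left algebra_simps)
  moreover have "D * c < D * (w \<bullet> x)"
    using wx D by simp
  ultimately have AB: "D < A + B"
    using on_line(3) by (simp add: mult_less_cancel_right)
  have "u \<in> C" "v \<in> C"
    using u v by (simp_all add: extreme_point_of_def)
  show False
  proof (cases "A \<le> 0")
    case True
    then have "v = w"
      by (rule extreme_point_eq_if_scaled_combination[OF C v \<open>w \<in> C\<close> \<open>u \<in> C\<close> dec D _ AB])
    then show False
      using wx on_line by simp
  next
    case False
    then have "B \<le> 0"
      using outside by (auto simp: A_def B_def)
    moreover have "D *\<^sub>R w = B *\<^sub>R v + A *\<^sub>R u"
      using dec by (simp add: add.commute)
    moreover have "D < B + A"
      using AB by simp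
    ultimately have "u = w"
      using extreme_point_eq_if_scaled_combination[OF C u \<open>w \<in> C\<close> \<open>v \<in> C\<close> _ D] by blast
    then show False
      using wx on_line by simp
  qed
qed

lemma inner_le_omega: "finite Q \<Longrightarrow> q \<in> Q \<Longrightarrow> q \<bullet> x \<le> omega x Q"
  unfolding omega_def by (intro Max_ge) auto

lemma omega_le_iff: "finite Q \<Longrightarrow> Q \<noteq> {} \<Longrightarrow> omega x Q \<le> c \<longleftrightarrow> (\<forall>q\<in>Q. q \<bullet> x \<le> c)"
  unfolding omega_def by (subst Max_le_iff) auto

lemma omega_attained: "finite Q \<Longrightarrow> Q \<noteq> {} \<Longrightarrow> \<exists>q\<in>Q. omega x Q = q \<bullet> x"
  unfolding omega_def using Max_in[of "(\<lambda>p. p \<bullet> x) ` Q"] by (metis finite_imageI image_iff image_is_empty)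

locale arg_sorted =
  fixes ts :: "complex list"
  assumes sorted_Arg: "sorted_wrt (\<lambda>a b. Arg a < Arg b) ts"
    and length_ge_2: "2 \<le> length ts"
begin

definition nxt :: "nat \<Rightarrow> nat" where
  "nxt i = (i + 1) mod length ts"

definition gap :: "nat \<Rightarrow> real" where
  "gap i = ccw_angle (ts ! i) (ts ! nxt i)"

lemma nxt_less: "i < length ts \<Longrightarrow> nxt i < length ts"
  unfolding nxt_def using length_ge_2 by (intro mod_less_divisor) linarith

lemma Arg_less: "i < k \<Longrightarrow> k < length ts \<Longrightarrow> Arg (ts ! i) < Arg (ts ! k)"
  using sorted_Arg by (simp add: sorted_wrt_iff_nth_less)

lemma gap_pos:
  assumes "i < length ts"
  shows "0 < gap i"
proof -
  have "Arg (ts ! i) \<noteq> Arg (ts ! nxt i)"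
  proof (cases "i + 1 < length ts")
    case True
    then show ?thesis
      using Arg_less[of i "i + 1"] by (simp add: nxt_def)
  next
    case False
    then have "i + 1 = length ts"
      using assms by simp
    then have "nxt i = 0" "0 < i"
      using length_ge_2 by (auto simp: nxt_def)
    then show ?thesis
      using Arg_less[of 0 i] assms by simp
  qed
  then show ?thesis
    using ccw_angle_nonneg ccw_angle_eq_0_iff unfolding gap_def by (metis order_le_less)
qed

lemma gap_le_ccw_angle:
  assumes i: "i < length ts" and k: "k < length ts" "k \<noteq> i"
  shows "gap i \<le> ccw_angle (ts ! i) (ts ! k)"
proof (cases "i + 1 < length ts")
  case True
  then have nxt: "nxt i = i + 1"
    by (simp add: nxt_def)
  have i_less: "Arg (ts ! i) < Arg (ts ! (i + 1))"
    using Arg_less True by simp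
  consider "i + 1 < k" | "k = i + 1" | "k < i"
    using k by linarith
  then show ?thesis
  proof cases
    case 1
    then have "Arg (ts ! (i + 1)) < Arg (ts ! k)"
      using Arg_less k by simp
    then show ?thesis
      using i_less unfolding gap_def nxt ccw_angle_def by simp
  next
    case 2
    then show ?thesis
      by (simp add: gap_def nxt)
  next
    case 3
    then have "Arg (ts ! k) < Arg (ts ! i)"
      using Arg_less i by simp
    then show ?thesis
      using i_less Arg_bounded[of "ts ! k"] Arg_bounded[of "ts ! (i + 1)"]
      unfolding gap_def nxt ccw_angle_def by simp
  qed
next
  case False
  then have "i + 1 = length ts"
    using i by simp
  then have "nxt i = 0"
    by (simp add: nxt_def)
  moreover have "Arg (ts ! 0) \<le> Arg (ts ! k)"
    using Arg_less[of 0 k] k by (cases "k = 0") simp_all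
  moreover have "Arg (ts ! k) < Arg (ts ! i)"
    using Arg_less[of k i] k \<open>i + 1 = length ts\<close> by simp
  ultimately show ?thesis
    unfolding gap_def ccw_angle_def by simp
qed

lemma exists_sector: "\<exists>i<length ts. ccw_angle (ts ! i) q < gap i"
proof -
  let ?A = "(\<lambda>k. ccw_angle (ts ! k) q) ` {..<length ts}"
  have "Min ?A \<in> ?A"
    using length_ge_2 by (intro Min_in) (auto simp: lessThan_empty_iff)
  then obtain i where i: "i < length ts" and i_min: "ccw_angle (ts ! i) q = Min ?A"
    by auto
  show ?thesis
  proof (rule ccontr)
    assume "\<not> ?thesis"
    then have "gap i \<le> ccw_angle (ts ! i) q"
      using i not_less by blast
    then have "ccw_angle (ts ! nxt i) q = ccw_angle (ts ! i) q - gap i"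
      unfolding gap_def by (rule ccw_angle_trans)
    also have "\<dots> < Min ?A"
      using gap_pos[OF i] i_min by simp
    also have "Min ?A \<le> ccw_angle (ts ! nxt i) q"
      using nxt_less[OF i] by (intro Min_le) auto
    finally show False
      by simp
  qed
qed

lemma not_cross_pos_between:
  assumes i: "i < length ts" and k: "k < length ts"
  shows "\<not> (0 < cross (ts ! i) (ts ! k) \<and> 0 < cross (ts ! k) (ts ! nxt i))"
proof (cases "k = i")
  case False
  then have gap_le: "gap i \<le> ccw_angle (ts ! i) (ts ! k)"
    using gap_le_ccw_angle i k by simp
  show ?thesis
  proof (cases "pi \<le> ccw_angle (ts ! i) (ts ! k)")
    case True
    then have "sin (ccw_angle (ts ! i) (ts ! k)) \<le> 0"
      using ccw_angle_less_2pi by (intro sin_le_zero)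
    then have "cross (ts ! i) (ts ! k) \<le> 0"
      unfolding cross_ccw_angle by (simp add: mult_nonneg_nonpos)
    then show ?thesis
      by simp
  next
    case False
    then have "0 \<le> sin (ccw_angle (ts ! i) (ts ! k) - gap i)"
      using gap_le gap_pos[OF i] by (intro sin_ge_zero) linarith+
    then have "sin (gap i - ccw_angle (ts ! i) (ts ! k)) \<le> 0"
      by (metis minus_diff_eq neg_0_le_iff_le sin_minus)
    then have "cross (ts ! k) (ts ! nxt i) \<le> 0"
      unfolding cross_ccw_angle_diff[of _ _ "ts ! i"] gap_def by (simp add: mult_nonneg_nonpos)
    then show ?thesis
      by simp
  qed
qed simp

end

locale hull_polygon =
  fixes P :: "complex set" and ts :: "complex list" and xs :: "nat \<Rightarrow> complex"
  assumes standing: "standing_cond P"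
    and vertices: "set ts = extreme_pts P"
    and Arg_sorted: "sorted_wrt (\<lambda>a b. Arg a < Arg b) ts"
    and edge_normal:
      "\<And>i. i < length ts \<Longrightarrow> ts ! i \<bullet> xs i = ts ! ((i + 1) mod length ts) \<bullet> xs i"
    and edge_normal_pos: "\<And>i. i < length ts \<Longrightarrow> 0 < ts ! i \<bullet> xs i"
begin

lemma finite_P: "finite P" and P_nonempty: "P \<noteq> {}"
  using standing by (auto simp: standing_cond_def)

lemma exists_inner_pos:
  assumes "x \<noteq> 0"
  shows "\<exists>q\<in>P. 0 < q \<bullet> x"
proof -
  let ?y = "(1 / norm x) *\<^sub>R x"
  have "0 < omega ?y P"
    using standing assms by (simp add: standing_cond_def)
  then obtain q where "q \<in> P" "0 < q \<bullet> ?y"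
    using omega_attained[OF finite_P P_nonempty] by metis
  moreover have "0 < q \<bullet> ?y \<longleftrightarrow> 0 < q \<bullet> x"
    using assms by (simp add: zero_less_divide_iff)
  ultimately show ?thesis
    by blast
qed

lemma omega_pos: "x \<noteq> 0 \<Longrightarrow> 0 < omega x P"
  using exists_inner_pos inner_le_omega[OF finite_P] by (meson less_le_trans)

lemma vertex_extreme: "i < length ts \<Longrightarrow> ts ! i extreme_point_of convex hull P"
  using vertices nth_mem unfolding extreme_pts_def by blast

lemma vertex_in_P: "i < length ts \<Longrightarrow> ts ! i \<in> P"
  using vertex_extreme extreme_point_of_convex_hull by blast

lemma vertex_nonzero: "i < length ts \<Longrightarrow> ts ! i \<noteq> 0"
  using edge_normal_pos by fastforce

lemma convex_hull_vertices: "convex hull P = convex hull (set ts)"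
proof -
  have "convex hull P = convex hull {x. x extreme_point_of (convex hull P)}"
    by (rule Krein_Milman_Minkowski) (simp_all add: finite_P finite_imp_compact_convex_hull)
  then show ?thesis
    using vertices by (simp add: extreme_pts_def)
qed

lemma inner_le_if_vertices_le:
  assumes "\<And>k. k < length ts \<Longrightarrow> ts ! k \<bullet> y \<le> c" and "q \<in> P"
  shows "q \<bullet> y \<le> c"
proof -
  have "set ts \<subseteq> {z. y \<bullet> z \<le> c}"
    using assms(1) by (auto simp: in_set_conv_nth inner_commute)
  then have "convex hull (set ts) \<subseteq> {z. y \<bullet> z \<le> c}"
    by (intro hull_minimal convex_halfspace_le)
  then show ?thesis
    using hull_subset[of P convex] convex_hull_vertices assms(2) by (auto simp: inner_commute)
qed

lemma zero_in_convex_hull: "0 \<in> convex hull P"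
proof (rule ccontr)
  assume "0 \<notin> convex hull P"
  moreover have "closed (convex hull P)"
    by (simp add: finite_P finite_imp_compact_convex_hull compact_imp_closed)
  ultimately obtain a b where "a \<noteq> 0" "0 < b" "\<forall>x\<in>convex hull P. b < a \<bullet> x"
    using separating_hyperplane_closed_0[of "convex hull P"] by auto
  moreover obtain q where "q \<in> P" "0 < q \<bullet> - a"
    using exists_inner_pos \<open>a \<noteq> 0\<close> by (metis neg_equal_0_iff_equal)
  ultimately show False
    using hull_subset[of P convex] by (force simp: inner_commute)
qed

sublocale arg_sorted ts
proof
  show "sorted_wrt (\<lambda>a b. Arg a < Arg b) ts"
    by (rule Arg_sorted)
  have "length ts \<noteq> 0"
    using P_nonempty convex_hull_vertices hull_subset[of P convex] by auto
  moreover have "length ts \<noteq> 1"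
  proof
    assume "length ts = 1"
    then have "P \<subseteq> {ts ! 0}"
      using convex_hull_vertices hull_subset[of P convex] by (auto simp: length_Suc_conv)
    moreover obtain q where "q \<in> P" "0 < Re q"
      using exists_inner_pos[of 1] by auto
    moreover obtain q' where "q' \<in> P" "Re q' < 0"
      using exists_inner_pos[of "-1"] by auto
    ultimately show False
      by (metis singletonD subsetD less_asym)
  qed
  ultimately show "2 \<le> length ts"
    by linarith
qed

text \<open>If the angular gap after \<open>t\<^sub>i\<close> were at least \<open>\<pi>\<close>, every vertex, hence every point
  of \<open>P\<close>, would have a non-positive inner product with the bisecting direction of the gap.\<close>

lemma gap_less_pi:
  assumes i: "i < length ts"
  shows "gap i < pi"
proof (rule ccontr)
  assume "\<not> gap i < pi"
  then have gap_ge: "pi \<le> gap i" by simp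
  define y where "y = cis (Arg (ts ! i) + gap i / 2)"
  have "ts ! k \<bullet> y \<le> 0" if k: "k < length ts" for k
  proof -
    have "cos (ccw_angle (ts ! i) (ts ! k) - gap i / 2) \<le> 0"
    proof (cases "k = i")
      case True
      then show ?thesis
        using cos_nonpos[of "gap i / 2"] gap_ge ccw_angle_less_2pi[of "ts ! i" "ts ! nxt i"]
        by (simp add: gap_def)
    next
      case False
      then have "gap i \<le> ccw_angle (ts ! i) (ts ! k)"
        using gap_le_ccw_angle i k by simp
      then show ?thesis
        using gap_ge ccw_angle_less_2pi[of "ts ! i" "ts ! k"] ccw_angle_less_2pi[of "ts ! i" "ts ! nxt i"]
        by (intro cos_nonpos) (simp_all add: gap_def)
    qed
    then show ?thesis
      unfolding y_def inner_cis_ccw_angle by (simp add: mult_nonneg_nonpos)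
  qed
  then have "\<forall>q\<in>P. q \<bullet> y \<le> 0"
    using inner_le_if_vertices_le by blast
  moreover have "y \<noteq> 0"
    unfolding y_def by (rule cis_neq_zero)
  ultimately show False
    using exists_inner_pos by fastforce
qed

lemma cross_edge_pos:
  assumes "i < length ts"
  shows "0 < cross (ts ! i) (ts ! nxt i)"
proof -
  have "0 < sin (gap i)"
    using gap_pos gap_less_pi assms by (intro sin_gt_zero)
  then show ?thesis
    using vertex_nonzero assms nxt_less[OF assms] by (simp add: cross_ccw_angle gap_def)
qed

lemma omega_edge_normal:
  assumes i: "i < length ts"
  shows "omega (xs i) P = ts ! i \<bullet> xs i"
proof (rule antisym)
  have "ts ! k \<bullet> xs i \<le> ts ! i \<bullet> xs i" if k: "k < length ts" for k
  proof (rule inner_le_on_edge)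
    show "convex (convex hull P)" "0 \<in> convex hull P"
      by (simp_all add: zero_in_convex_hull)
    show "ts ! i extreme_point_of convex hull P" "ts ! nxt i extreme_point_of convex hull P"
      using vertex_extreme i nxt_less by simp_all
    show "ts ! k \<in> convex hull P"
      using vertex_in_P k hull_subset[of P convex] by blast
    show "0 < cross (ts ! i) (ts ! nxt i)"
      using cross_edge_pos i .
    show "ts ! nxt i \<bullet> xs i = ts ! i \<bullet> xs i"
      using edge_normal i by (simp add: nxt_def)
    show "\<not> (0 < cross (ts ! i) (ts ! k) \<and> 0 < cross (ts ! k) (ts ! nxt i))"
      using not_cross_pos_between i k .
  qed (use edge_normal_pos i in simp_all)
  then show "omega (xs i) P \<le> ts ! i \<bullet> xs i"
    using omega_le_iff[OF finite_P P_nonempty] inner_le_if_vertices_le by blast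
  show "ts ! i \<bullet> xs i \<le> omega (xs i) P"
    using inner_le_omega[OF finite_P vertex_in_P[OF i]] .
qed

lemma conic_edge_decomposition:
  "\<exists>i<length ts. \<exists>a b. 0 \<le> a \<and> 0 \<le> b \<and> q = a *\<^sub>R ts ! i + b *\<^sub>R ts ! nxt i"
proof -
  obtain i where i: "i < length ts" and "ccw_angle (ts ! i) q < gap i"
    using exists_sector by blast
  then have "0 \<le> cross (ts ! i) q" "0 \<le> cross q (ts ! nxt i)"
    using cross_nonneg_in_sector[of "ts ! i" q "ts ! nxt i"] gap_less_pi[OF i]
    by (simp_all add: gap_def)
  then show ?thesis
    using conic_combination_if_cross_nonneg[OF cross_edge_pos[OF i]] i by blast
qed

lemma approx_cell_nonempty_iff:
  "approx_cell \<epsilon> P p \<noteq> {} \<longleftrightarrow> (\<exists>i<length ts. (1 - \<epsilon>) * (ts ! i \<bullet> xs i) \<le> p \<bullet> xs i)"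
proof
  assume "approx_cell \<epsilon> P p \<noteq> {}"
  then obtain x where "x \<noteq> 0" and x: "(1 - \<epsilon>) * omega x P \<le> p \<bullet> x"
    unfolding approx_cell_def by blast
  obtain i a b where i: "i < length ts" and "0 \<le> a" "0 \<le> b"
    and p: "p = a *\<^sub>R ts ! i + b *\<^sub>R ts ! nxt i"
    using conic_edge_decomposition by blast
  have "p \<bullet> x \<le> (a + b) * omega x P"
    using inner_le_omega[OF finite_P vertex_in_P[OF i]]
      inner_le_omega[OF finite_P vertex_in_P[OF nxt_less[OF i]]] \<open>0 \<le> a\<close> \<open>0 \<le> b\<close>
    by (simp add: p inner_add_left distrib_right add_mono mult_left_mono)
  with x have "(1 - \<epsilon>) * omega x P \<le> (a + b) * omega x P"
    by linarith
  then have "1 - \<epsilon> \<le> a + b"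
    using omega_pos[OF \<open>x \<noteq> 0\<close>] by (simp add: mult_le_cancel_right)
  moreover have "p \<bullet> xs i = (a + b) * (ts ! i \<bullet> xs i)"
    using edge_normal[OF i] by (simp add: p inner_add_left nxt_def algebra_simps)
  ultimately have "(1 - \<epsilon>) * (ts ! i \<bullet> xs i) \<le> p \<bullet> xs i"
    using edge_normal_pos[OF i] by (simp add: mult_right_mono)
  then show "\<exists>i<length ts. (1 - \<epsilon>) * (ts ! i \<bullet> xs i) \<le> p \<bullet> xs i"
    using i by blast
next
  assume "\<exists>i<length ts. (1 - \<epsilon>) * (ts ! i \<bullet> xs i) \<le> p \<bullet> xs i"
  then obtain i where "i < length ts" "(1 - \<epsilon>) * omega (xs i) P \<le> p \<bullet> xs i"
    using omega_edge_normal by auto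
  moreover have "xs i \<noteq> 0"
    using edge_normal_pos[OF \<open>i < length ts\<close>] by auto
  ultimately show "approx_cell \<epsilon> P p \<noteq> {}"
    unfolding approx_cell_def by blast
qed

end

theorem lemma1:
  fixes P :: "complex set" and \<epsilon> :: real and ts :: "complex list" and xs :: "nat \<Rightarrow> complex"
  assumes "standing_cond P"
    and "0 < \<epsilon>" and "\<epsilon> < 1"
    and "distinct ts" and "set ts = extreme_pts P"
    and "sorted_wrt (\<lambda>a b. Arg a < Arg b) ts"
    and "\<forall>i < length ts. xs i \<in> sphere 0 1
           \<and> ts ! i \<bullet> xs i = ts ! ((i + 1) mod length ts) \<bullet> xs i
           \<and> ts ! i \<bullet> xs i > 0"
  shows "\<forall>p \<in> P. p \<in> extreme_pts P \<union>
                 {q \<in> P - extreme_pts P. \<exists>i < length ts. q \<bullet> xs i \<ge> (1 - \<epsilon>) * (ts ! i \<bullet> xs i)}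
            \<longleftrightarrow> approx_cell \<epsilon> P p \<noteq> {}"
proof -
  interpret hull_polygon P ts xs
    using assms by unfold_locales auto
  have "\<exists>i<length ts. (1 - \<epsilon>) * (ts ! i \<bullet> xs i) \<le> p \<bullet> xs i" if "p \<in> extreme_pts P" for p
  proof -
    obtain i where "i < length ts" "p = ts ! i"
      using \<open>p \<in> extreme_pts P\<close> vertices by (metis in_set_conv_nth)
    then show ?thesis
      using edge_normal_pos[of i] \<open>0 < \<epsilon>\<close> by (auto simp: mult_le_cancel_right1)
  qed
  then show ?thesis
    unfolding approx_cell_nonempty_iff by auto
qed

end
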